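(* In the replace-after-fixed-time process with parameters $\lambda>0$, $r>0$, for $j\in\{0,1,2,\ldots\}$ and $jr\le t<(j+1)r$, \[ E[A(t)]=\sum_{m=1}^{j}e^{-\lambda m r}\big(1+\lambda(t-mr)\big), \] (the empty sum being $0$ when $j=0$).
   Context: Let $X_1,X_2,\ldots$ be independent random variables, each exponentially distributed with rate $\lambda>0$ (density $\lambda e^{-\lambda x}$ for $x>0$). Fix $r>0$ and set $Y_k=\min(X_k,r)$. For $t\ge 0$ let $N(t)=\max\{n\ge 0:\sum_{k=1}^n Y_k\le t\}$ (the replace-after-fixed-time, or RaFT, process). Write $N(t)=A(t)+D(t)$, where $A(t)=\#\{k\le N(t): X_k>r\}$ (components replaced while still functioning) and $D(t)=\#\{k\le N(t): X_k\le r\}$ (components replaced because they failed). *)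

theory Defs
  imports "HOL-Probability.Probability"
begin

text \<open>RaFT process. X k (k \<ge> 1) are the lifetimes; Y_k = min(X_k, r).\<close>

definition raft_Y :: "(nat \<Rightarrow> 'a \<Rightarrow> real) \<Rightarrow> real \<Rightarrow> nat \<Rightarrow> 'a \<Rightarrow> real" where
  "raft_Y X r k \<omega> = min (X k \<omega>) r"

definition raft_N :: "(nat \<Rightarrow> 'a \<Rightarrow> real) \<Rightarrow> real \<Rightarrow> real \<Rightarrow> 'a \<Rightarrow> nat" where
  "raft_N X r t \<omega> = (GREATEST n. (\<Sum>k=1..n. raft_Y X r k \<omega>) \<le> t)"

definition raft_A :: "(nat \<Rightarrow> 'a \<Rightarrow> real) \<Rightarrow> real \<Rightarrow> real \<Rightarrow> 'a \<Rightarrow> nat" where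
  "raft_A X r t \<omega> = card {k \<in> {1..raft_N X r t \<omega>}. X k \<omega> > r}"

definition raft_D :: "(nat \<Rightarrow> 'a \<Rightarrow> real) \<Rightarrow> real \<Rightarrow> real \<Rightarrow> 'a \<Rightarrow> nat" where
  "raft_D X r t \<omega> = card {k \<in> {1..raft_N X r t \<omega>}. X k \<omega> \<le> r}"

end

theory Submission
  imports Defs
begin

text \<open>Write \<open>S k = Y 1 + \<dots> + Y k\<close>. The \<open>(k+1)\<close>-st replacement is preventive and happens
  by time \<open>t\<close> iff \<open>X (k+1) > r\<close> and \<open>S k \<le> t - r\<close>; as \<open>X (k+1)\<close> is independent of \<open>S k\<close>,
  \<open>E A(t) = e\<^sup>-\<^sup>\<lambda>\<^sup>r U(t - r)\<close> for the renewal function \<open>U s = \<Sum>\<^sub>k\<^sub>\<ge>\<^sub>0 P(S k \<le> s)\<close>.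
  A running component fails at rate \<open>\<lambda>\<close>, which in expectation reads
  \<open>P(X (k+1) \<le> r, S (k+1) \<le> s) = \<lambda> E(s - S k)\<^sup>+ - \<lambda> E(s - S (k+1))\<^sup>+\<close>.
  Together with the preventive case this telescopes, after summing over \<open>k\<close>, to the renewal
  equation \<open>U s = 1 + \<lambda> s + e\<^sup>-\<^sup>\<lambda>\<^sup>r U(s - r)\<close> for \<open>s \<ge> 0\<close>; since \<open>U\<close> vanishes on negative
  arguments, unfolding it \<open>j\<close> times gives the formula.\<close>

lemma (in prob_space) nn_integral_indep_var_iterated:
  fixes f :: "real \<Rightarrow> real \<Rightarrow> ennreal"
  assumes indep: "indep_var borel U borel Z"
    and f[measurable]: "case_prod f \<in> borel_measurable (borel \<Otimes>\<^sub>M borel)"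
  shows "(\<integral>\<^sup>+\<omega>. f (U \<omega>) (Z \<omega>) \<partial>M) = (\<integral>\<^sup>+\<omega>. (\<integral>\<^sup>+\<omega>'. f (U \<omega>') (Z \<omega>) \<partial>M) \<partial>M)"
proof -
  have [measurable]: "random_variable borel U" "random_variable borel Z"
    and joint: "distr M borel U \<Otimes>\<^sub>M distr M borel Z = distr M (borel \<Otimes>\<^sub>M borel) (\<lambda>\<omega>. (U \<omega>, Z \<omega>))"
    using indep unfolding indep_var_distribution_eq by auto
  interpret U: prob_space "distr M borel U" by (rule prob_space_distr) simp
  interpret Z: prob_space "distr M borel Z" by (rule prob_space_distr) simp
  interpret UZ: pair_prob_space "distr M borel U" "distr M borel Z" ..
  have "(\<integral>\<^sup>+\<omega>. f (U \<omega>) (Z \<omega>) \<partial>M) = (\<integral>\<^sup>+p. case_prod f p \<partial>(distr M borel U \<Otimes>\<^sub>M distr M borel Z))"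
    by (simp add: joint nn_integral_distr)
  also have "\<dots> = (\<integral>\<^sup>+z. (\<integral>\<^sup>+x. f x z \<partial>distr M borel U) \<partial>distr M borel Z)"
    by (subst UZ.nn_integral_snd[symmetric]) auto
  also have "\<dots> = (\<integral>\<^sup>+\<omega>. (\<integral>\<^sup>+\<omega>'. f (U \<omega>') (Z \<omega>) \<partial>M) \<partial>M)"
    by (simp add: nn_integral_distr)
  finally show ?thesis .
qed

lemma measurable_Greatest_nat:
  fixes P :: "nat \<Rightarrow> 'a \<Rightarrow> bool"
  assumes [measurable]: "\<And>n. Measurable.pred M (P n)"
  shows "(\<lambda>\<omega>. GREATEST n. P n \<omega>) \<in> measurable M (count_space UNIV)"
  unfolding Greatest_def by (rule measurable_THE[where I=UNIV]) (auto intro: antisym)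

lemma card_filter_atLeastAtMost_eq_sum:
  "real (card {k \<in> {1..N}. P k}) = (\<Sum>k<N. if P (Suc k) then 1 else 0)"
proof (induction N)
  case (Suc N)
  have "{k \<in> {1..Suc N}. P k} = {k \<in> {1..N}. P k} \<union> (if P (Suc N) then {Suc N} else {})"
    by (auto simp: le_Suc_eq)
  then show ?case using Suc by (auto simp: card_insert_if)
qed simp

lemma strict_mono_le_iff_le_Greatest:
  fixes f :: "nat \<Rightarrow> 'a::linorder"
  assumes mono: "strict_mono f" and "f 0 \<le> t" and "t < f n"
  shows "f k \<le> t \<longleftrightarrow> k \<le> (GREATEST m. f m \<le> t)"
proof -
  have bounded: "m \<le> n" if "f m \<le> t" for m
    using that \<open>t < f n\<close> strict_mono_less_eq[OF mono, of n m] by (meson le_cases order.trans not_le)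
  have "f (GREATEST m. f m \<le> t) \<le> t"
    using \<open>f 0 \<le> t\<close> bounded by (rule GreatestI_nat)
  then show ?thesis
    using bounded Greatest_le_nat[of "\<lambda>m. f m \<le> t"] strict_mono_less_eq[OF mono]
    by (meson order.trans)
qed

context prob_space
begin

context
  fixes X :: "'a \<Rightarrow> real" and l :: real
  assumes exp_X: "distributed M lborel X (exponential_density l)" and l: "0 < l"
begin

lemma exponential_measurable[measurable]: "X \<in> borel_measurable M"
  using exp_X distributed_measurable by fastforce

lemma exponential_AE_pos: "AE \<omega> in M. 0 < X \<omega>"
proof -
  have "prob {\<omega>\<in>space M. 0 < X \<omega>} = 1"
    using exponential_distributedD_gt[OF exp_X order.refl l] by simp
  then show ?thesis by (subst prob_Collect_eq_1[symmetric]) auto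
qed

lemma exponential_nn_integral_min:
  assumes m: "0 \<le> m"
  shows "(\<integral>\<^sup>+\<omega>. ennreal (min (X \<omega>) m) \<partial>M) = ennreal ((1 - exp (- m * l)) / l)"
proof -
  define F where "F x = - (x + 1 / l) * exp (- x * l)" for x
  have "(\<integral>\<^sup>+\<omega>. ennreal (min (X \<omega>) m) \<partial>M) =
      (\<integral>\<^sup>+\<omega>. ennreal (X \<omega> * indicator {0..m} (X \<omega>)) + ennreal m * indicator {\<omega>\<in>space M. m < X \<omega>} \<omega> \<partial>M)"
    using exponential_AE_pos by (intro nn_integral_cong_AE) (auto simp: indicator_def)
  also have "\<dots> = (\<integral>\<^sup>+x. ennreal (exponential_density l x) * ennreal (x * indicator {0..m} x) \<partial>lborel)
      + ennreal m * emeasure M {\<omega>\<in>space M. m < X \<omega>}"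
    by (subst nn_integral_add) (auto simp: nn_integral_cmult distributed_nn_integral[OF exp_X])
  also have "(\<integral>\<^sup>+x. ennreal (exponential_density l x) * ennreal (x * indicator {0..m} x) \<partial>lborel)
      = (\<integral>\<^sup>+x. ennreal (l * exp (- x * l) * x) * indicator {0..m} x \<partial>lborel)"
    using l by (intro nn_integral_cong) (auto simp: exponential_density_def indicator_def ennreal_mult)
  also have "\<dots> = F m - F 0"
  proof (rule nn_integral_FTC_Icc)
    fix x assume "x \<in> {0..m}"
    show "DERIV F x :> l * exp (- x * l) * x"
      unfolding F_def by (rule derivative_eq_intros refl | simp)+ (use l in \<open>simp add: field_simps\<close>)
    show "0 \<le> l * exp (- x * l) * x" using l \<open>x \<in> {0..m}\<close> by auto
  qed (use m in auto)
  also have "emeasure M {\<omega>\<in>space M. m < X \<omega>} = exp (- m * l)"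
    using exponential_distributedD_gt[OF exp_X m l] by (simp add: emeasure_eq_measure)
  also have "ennreal (F m - F 0) + ennreal m * ennreal (exp (- m * l)) = ennreal (F m - F 0 + m * exp (- m * l))"
  proof -
    have "exp (- m * l) * (1 + l * m) \<le> exp (- m * l) * exp (l * m)"
      by (intro mult_left_mono exp_ge_add_one_self) auto
    then have "0 \<le> F m - F 0"
      using l by (simp add: F_def field_simps flip: exp_add)
    then show ?thesis using m by (simp add: ennreal_mult)
  qed
  also have "F m - F 0 + m * exp (- m * l) = (1 - exp (- m * l)) / l"
    using l by (simp add: F_def field_simps)
  finally show ?thesis .
qed

text \<open>The rate \<open>l\<close> as a compensator: \<open>(u - min X r)\<^sup>+ + min X m = u\<^sup>+\<close> for
  \<open>m = (min r u)\<^sup>+\<close>, and \<open>E (min X m) = P(X \<le> m) / l\<close>.\<close>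
lemma exponential_failure_compensator:
  assumes r: "0 \<le> r"
  shows "emeasure M {\<omega>\<in>space M. X \<omega> \<le> r \<and> X \<omega> \<le> u}
      + ennreal l * (\<integral>\<^sup>+\<omega>. ennreal (u - min (X \<omega>) r) \<partial>M) = ennreal (l * u)"
proof -
  define m where "m = max 0 (min r u)"
  have m: "0 \<le> m" by (simp add: m_def)
  have "emeasure M {\<omega>\<in>space M. X \<omega> \<le> r \<and> X \<omega> \<le> u} = emeasure M {\<omega>\<in>space M. X \<omega> \<le> m}"
    using exponential_AE_pos by (intro emeasure_eq_AE) (auto simp: m_def)
  also have "\<dots> = ennreal l * ennreal ((1 - exp (- m * l)) / l)"
    using exponential_distributedD_le[OF exp_X m l] l
    by (simp add: emeasure_eq_measure flip: ennreal_mult')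
  also have "ennreal ((1 - exp (- m * l)) / l) = (\<integral>\<^sup>+\<omega>. ennreal (min (X \<omega>) m) \<partial>M)"
    by (rule exponential_nn_integral_min[OF m, symmetric])
  finally have "emeasure M {\<omega>\<in>space M. X \<omega> \<le> r \<and> X \<omega> \<le> u}
      + ennreal l * (\<integral>\<^sup>+\<omega>. ennreal (u - min (X \<omega>) r) \<partial>M)
    = ennreal l * (\<integral>\<^sup>+\<omega>. ennreal (u - min (X \<omega>) r) + ennreal (min (X \<omega>) m) \<partial>M)"
    by (simp add: nn_integral_add distrib_left add.commute)
  also have "(\<integral>\<^sup>+\<omega>. ennreal (u - min (X \<omega>) r) + ennreal (min (X \<omega>) m) \<partial>M) = (\<integral>\<^sup>+\<omega>. ennreal u \<partial>M)"
  proof (intro nn_integral_cong_AE, use exponential_AE_pos in eventually_elim)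
    fix \<omega> assume "0 < X \<omega>"
    then show "ennreal (u - min (X \<omega>) r) + ennreal (min (X \<omega>) m) = ennreal u"
      using r by (cases "u \<le> 0") (auto simp: m_def ennreal_neg ennreal_plus[symmetric] min_def)
  qed
  finally show ?thesis
    using l by (simp add: emeasure_space_1 flip: ennreal_mult')
qed

end

end

locale raft_process = prob_space M for M :: "'a measure" +
  fixes X :: "nat \<Rightarrow> 'a \<Rightarrow> real" and l r :: real
  assumes rate_pos: "0 < l" and r_pos: "0 < r"
    and indep_X: "indep_vars (\<lambda>_. borel) X {1::nat..}"
    and exponential_X: "\<And>k. 1 \<le> k \<Longrightarrow> distributed M lborel (X k) (exponential_density l)"
begin

definition S :: "nat \<Rightarrow> 'a \<Rightarrow> real" where
  "S n \<omega> = (\<Sum>i=1..n. min (X i \<omega>) r)"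

lemma S_0[simp]: "S 0 \<omega> = 0"
  by (simp add: S_def)

lemma S_Suc: "S (Suc n) \<omega> = S n \<omega> + min (X (Suc n) \<omega>) r"
  by (simp add: S_def)

lemma raft_N_eq_Greatest_S: "raft_N X r t \<omega> = (GREATEST n. S n \<omega> \<le> t)"
  by (simp add: raft_N_def raft_Y_def S_def)

lemma exponential_X_Suc: "distributed M lborel (X (Suc k)) (exponential_density l)"
  by (simp add: exponential_X)

lemma X_measurable[measurable]: "X (Suc k) \<in> borel_measurable M"
  using exponential_measurable[OF exponential_X_Suc rate_pos] .

lemma S_measurable[measurable]: "S n \<in> borel_measurable M"
  unfolding S_def
  by (intro borel_measurable_sum borel_measurable_min)
     (auto intro: exponential_measurable[OF exponential_X rate_pos])

lemma indep_X_Suc_S: "indep_var borel (X (Suc k)) borel (S k)"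
proof -
  have "indep_var
      borel ((\<lambda>f. f (Suc k)) \<circ> (\<lambda>\<omega>. restrict (\<lambda>i. X i \<omega>) {Suc k}))
      borel ((\<lambda>f. \<Sum>i=1..k. min (f i) r) \<circ> (\<lambda>\<omega>. restrict (\<lambda>i. X i \<omega>) {1..k}))"
    by (intro indep_var_compose[OF indep_var_restrict[OF indep_X]]) auto
  then show ?thesis by (simp add: comp_def S_def[abs_def])
qed

lemma AE_X_pos: "AE \<omega> in M. \<forall>k. 0 < X (Suc k) \<omega>"
  using exponential_AE_pos[OF exponential_X_Suc rate_pos]
  by (simp add: AE_all_countable)

lemma AE_S_strict_mono: "AE \<omega> in M. strict_mono (\<lambda>n. S n \<omega>)"
  using AE_X_pos by eventually_elim (use r_pos in \<open>auto intro!: strict_monoI_Suc simp: S_Suc\<close>)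

lemma AE_S_nonneg: "AE \<omega> in M. \<forall>n. 0 \<le> S n \<omega>"
  using AE_S_strict_mono by eventually_elim (metis S_0 strict_mono_less_eq zero_le)

lemma prob_S_le_neg:
  assumes "s < 0"
  shows "prob {\<omega>\<in>space M. S k \<omega> \<le> s} = 0"
proof -
  have "AE \<omega> in M. \<not> S k \<omega> \<le> s"
    using AE_S_nonneg by eventually_elim (use assms in \<open>meson leD order.trans\<close>)
  then show ?thesis by (simp add: measure_def emeasure_eq_0_AE)
qed

lemma emeasure_X_Suc_gt_and_S_le:
  "emeasure M {\<omega>\<in>space M. r < X (Suc k) \<omega> \<and> S k \<omega> \<le> u}
    = ennreal (exp (- r * l)) * emeasure M {\<omega>\<in>space M. S k \<omega> \<le> u}"
proof -
  have long: "emeasure M {\<omega>\<in>space M. r < X (Suc k) \<omega>} = ennreal (exp (- r * l))"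
    using exponential_distributedD_gt[OF exponential_X_Suc less_imp_le[OF r_pos] rate_pos]
    by (simp add: emeasure_eq_measure)
  have "emeasure M {\<omega>\<in>space M. r < X (Suc k) \<omega> \<and> S k \<omega> \<le> u}
      = (\<integral>\<^sup>+\<omega>. indicator {\<omega>\<in>space M. r < X (Suc k) \<omega> \<and> S k \<omega> \<le> u} \<omega> \<partial>M)"
    by simp
  also have "\<dots> = (\<integral>\<^sup>+\<omega>. indicator {r<..} (X (Suc k) \<omega>) * indicator {..u} (S k \<omega>) \<partial>M)"
    by (intro nn_integral_cong) (auto split: split_indicator)
  also have "\<dots> = (\<integral>\<^sup>+\<omega>. (\<integral>\<^sup>+\<omega>'. indicator {r<..} (X (Suc k) \<omega>') * indicator {..u} (S k \<omega>) \<partial>M) \<partial>M)"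
    by (rule nn_integral_indep_var_iterated[OF indep_X_Suc_S]) measurable
  also have "\<dots> = (\<integral>\<^sup>+\<omega>. ennreal (exp (- r * l)) * indicator {\<omega>\<in>space M. S k \<omega> \<le> u} \<omega> \<partial>M)"
  proof (intro nn_integral_cong)
    have "(\<integral>\<^sup>+\<omega>'. indicator {r<..} (X (Suc k) \<omega>') \<partial>M)
        = (\<integral>\<^sup>+\<omega>'. indicator {\<omega>\<in>space M. r < X (Suc k) \<omega>} \<omega>' \<partial>M)"
      by (intro nn_integral_cong) (auto split: split_indicator)
    then have "(\<integral>\<^sup>+\<omega>'. indicator {r<..} (X (Suc k) \<omega>') \<partial>M) = ennreal (exp (- r * l))"
      by (simp add: long)
    then show "(\<integral>\<^sup>+\<omega>'. indicator {r<..} (X (Suc k) \<omega>') * indicator {..u} (S k \<omega>) \<partial>M)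
        = ennreal (exp (- r * l)) * indicator {\<omega>\<in>space M. S k \<omega> \<le> u} \<omega>" if "\<omega> \<in> space M" for \<omega>
      using that by (simp add: nn_integral_multc split: split_indicator)
  qed
  finally show ?thesis by (simp add: nn_integral_cmult_indicator)
qed

lemma emeasure_X_Suc_le_and_S_Suc_le:
  "emeasure M {\<omega>\<in>space M. X (Suc k) \<omega> \<le> r \<and> S (Suc k) \<omega> \<le> s}
      + ennreal l * (\<integral>\<^sup>+\<omega>. ennreal (s - S (Suc k) \<omega>) \<partial>M)
    = ennreal l * (\<integral>\<^sup>+\<omega>. ennreal (s - S k \<omega>) \<partial>M)"
proof -
  define f where "f x z = indicator {(x, z). x \<le> r \<and> x \<le> s - z} (x, z) + ennreal l * ennreal (s - z - min x r)"
    for x z :: real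
  have [measurable]: "case_prod f \<in> borel_measurable (borel \<Otimes>\<^sub>M borel)"
    unfolding f_def by measurable
  have "emeasure M {\<omega>\<in>space M. X (Suc k) \<omega> \<le> r \<and> S (Suc k) \<omega> \<le> s}
      + ennreal l * (\<integral>\<^sup>+\<omega>. ennreal (s - S (Suc k) \<omega>) \<partial>M)
    = (\<integral>\<^sup>+\<omega>. indicator {\<omega>\<in>space M. X (Suc k) \<omega> \<le> r \<and> S (Suc k) \<omega> \<le> s} \<omega>
        + ennreal l * ennreal (s - S (Suc k) \<omega>) \<partial>M)"
    by (simp add: nn_integral_add nn_integral_cmult)
  also have "\<dots> = (\<integral>\<^sup>+\<omega>. f (X (Suc k) \<omega>) (S k \<omega>) \<partial>M)"
    by (auto simp: f_def S_Suc diff_diff_eq intro!: nn_integral_cong split: split_indicator)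
  also have "\<dots> = (\<integral>\<^sup>+\<omega>. (\<integral>\<^sup>+\<omega>'. f (X (Suc k) \<omega>') (S k \<omega>) \<partial>M) \<partial>M)"
    by (rule nn_integral_indep_var_iterated[OF indep_X_Suc_S]) measurable
  also have "\<dots> = (\<integral>\<^sup>+\<omega>. ennreal l * ennreal (s - S k \<omega>) \<partial>M)"
  proof (intro nn_integral_cong)
    fix \<omega>
    have "(\<integral>\<^sup>+\<omega>'. f (X (Suc k) \<omega>') (S k \<omega>) \<partial>M)
        = emeasure M {\<omega>'\<in>space M. X (Suc k) \<omega>' \<le> r \<and> X (Suc k) \<omega>' \<le> s - S k \<omega>}
          + ennreal l * (\<integral>\<^sup>+\<omega>'. ennreal (s - S k \<omega> - min (X (Suc k) \<omega>') r) \<partial>M)"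
    proof -
      have "(\<integral>\<^sup>+\<omega>'. f (X (Suc k) \<omega>') (S k \<omega>) \<partial>M)
          = (\<integral>\<^sup>+\<omega>'. indicator {\<omega>'\<in>space M. X (Suc k) \<omega>' \<le> r \<and> X (Suc k) \<omega>' \<le> s - S k \<omega>} \<omega>'
              + ennreal l * ennreal (s - S k \<omega> - min (X (Suc k) \<omega>') r) \<partial>M)"
        by (intro nn_integral_cong) (simp add: f_def split: split_indicator)
      then show ?thesis by (simp add: nn_integral_add nn_integral_cmult)
    qed
    also have "\<dots> = ennreal l * ennreal (s - S k \<omega>)"
      using exponential_failure_compensator[OF exponential_X_Suc rate_pos less_imp_le[OF r_pos]]
        rate_pos by (simp add: ennreal_mult' less_imp_le)
    finally show "(\<integral>\<^sup>+\<omega>'. f (X (Suc k) \<omega>') (S k \<omega>) \<partial>M) = ennreal l * ennreal (s - S k \<omega>)" .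
  qed
  finally show ?thesis by (simp add: nn_integral_cmult)
qed

text \<open>As \<open>ennreal\<close> truncates negative values, \<open>slack k s = E (s - S k)\<^sup>+\<close>.\<close>
definition slack :: "nat \<Rightarrow> real \<Rightarrow> real" where
  "slack k s = enn2real (\<integral>\<^sup>+\<omega>. ennreal (s - S k \<omega>) \<partial>M)"

lemma nn_integral_slack_le:
  "(\<integral>\<^sup>+\<omega>. ennreal (s - S k \<omega>) \<partial>M) \<le> ennreal (max s 0 * prob {\<omega>\<in>space M. S k \<omega> \<le> s})"
proof -
  have "(\<integral>\<^sup>+\<omega>. ennreal (s - S k \<omega>) \<partial>M)
      \<le> (\<integral>\<^sup>+\<omega>. ennreal (max s 0) * indicator {\<omega>\<in>space M. S k \<omega> \<le> s} \<omega> \<partial>M)"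
    using AE_S_nonneg AE_space
    by (intro nn_integral_mono_AE, eventually_elim)
       (auto simp: indicator_def ennreal_neg intro!: ennreal_leI)
  then show ?thesis
    by (simp add: nn_integral_cmult_indicator emeasure_eq_measure ennreal_mult)
qed

lemma nn_integral_slack: "(\<integral>\<^sup>+\<omega>. ennreal (s - S k \<omega>) \<partial>M) = ennreal (slack k s)"
  using nn_integral_slack_le[of s k] unfolding slack_def
  by (metis ennreal_enn2real_if ennreal_neq_top neq_top_trans)

lemma slack_le: "slack k s \<le> max s 0 * prob {\<omega>\<in>space M. S k \<omega> \<le> s}"
  using nn_integral_slack_le[of s k] by (simp add: nn_integral_slack)

lemma slack_nonneg: "0 \<le> slack k s"
  by (simp add: slack_def)

lemma slack_0: "slack 0 s = max s 0"
  by (cases "0 \<le> s") (auto simp: slack_def emeasure_space_1 ennreal_neg)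

lemma prob_S_Suc_le:
  "prob {\<omega>\<in>space M. S (Suc k) \<omega> \<le> s}
    = exp (- r * l) * prob {\<omega>\<in>space M. S k \<omega> \<le> s - r} + l * (slack k s - slack (Suc k) s)"
proof -
  have "{\<omega>\<in>space M. S (Suc k) \<omega> \<le> s}
      = {\<omega>\<in>space M. r < X (Suc k) \<omega> \<and> S k \<omega> \<le> s - r}
        \<union> {\<omega>\<in>space M. X (Suc k) \<omega> \<le> r \<and> S (Suc k) \<omega> \<le> s}"
    by (auto simp: S_Suc min_def)
  then have "emeasure M {\<omega>\<in>space M. S (Suc k) \<omega> \<le> s}
      = emeasure M {\<omega>\<in>space M. r < X (Suc k) \<omega> \<and> S k \<omega> \<le> s - r}
        + emeasure M {\<omega>\<in>space M. X (Suc k) \<omega> \<le> r \<and> S (Suc k) \<omega> \<le> s}"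
    by (simp, subst plus_emeasure) auto
  then have "ennreal (prob {\<omega>\<in>space M. S (Suc k) \<omega> \<le> s}) + ennreal (l * slack (Suc k) s)
      = ennreal (exp (- r * l) * prob {\<omega>\<in>space M. S k \<omega> \<le> s - r}) + ennreal (l * slack k s)"
    using emeasure_X_Suc_gt_and_S_le[of k "s - r"] emeasure_X_Suc_le_and_S_Suc_le[of k s] rate_pos
    by (simp add: nn_integral_slack emeasure_eq_measure ennreal_mult' add.assoc)
  then have "prob {\<omega>\<in>space M. S (Suc k) \<omega> \<le> s} + l * slack (Suc k) s
      = exp (- r * l) * prob {\<omega>\<in>space M. S k \<omega> \<le> s - r} + l * slack k s"
    using rate_pos by (simp add: ennreal_plus[symmetric] slack_nonneg del: ennreal_plus)
  then show ?thesis by (simp add: algebra_simps)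
qed

lemma sum_prob_S_Suc_le:
  "(\<Sum>k<K. prob {\<omega>\<in>space M. S (Suc k) \<omega> \<le> s})
    = exp (- r * l) * (\<Sum>k<K. prob {\<omega>\<in>space M. S k \<omega> \<le> s - r}) + l * (max s 0 - slack K s)"
proof (induction K)
  case (Suc K)
  then show ?case by (simp add: prob_S_Suc_le[of K] algebra_simps)
qed (simp add: slack_0)

lemma sum_prob_S_Suc_le_bound:
  "s < real j * r \<Longrightarrow> (\<Sum>k<K. prob {\<omega>\<in>space M. S (Suc k) \<omega> \<le> s}) \<le> real j * (1 + l * max s 0)"
proof (induction j arbitrary: s K)
  case 0
  then show ?case by (simp add: prob_S_le_neg)
next
  case (Suc j)
  have "(\<Sum>k<K. prob {\<omega>\<in>space M. S k \<omega> \<le> s - r}) \<le> (\<Sum>k<Suc K. prob {\<omega>\<in>space M. S k \<omega> \<le> s - r})"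
    by (simp only: sum.lessThan_Suc) (simp add: measure_nonneg)
  also have "\<dots> = prob {\<omega>\<in>space M. S 0 \<omega> \<le> s - r} + (\<Sum>k<K. prob {\<omega>\<in>space M. S (Suc k) \<omega> \<le> s - r})"
    by (rule sum.lessThan_Suc_shift)
  also have "\<dots> \<le> 1 + real j * (1 + l * max (s - r) 0)"
  proof (rule add_mono)
    show "(\<Sum>k<K. prob {\<omega>\<in>space M. S (Suc k) \<omega> \<le> s - r}) \<le> real j * (1 + l * max (s - r) 0)"
      using Suc.prems by (intro Suc.IH) (simp add: algebra_simps)
  qed simp
  also have "\<dots> \<le> 1 + real j * (1 + l * max s 0)"
    using rate_pos r_pos by (intro add_left_mono mult_left_mono) auto
  finally have "(\<Sum>k<K. prob {\<omega>\<in>space M. S k \<omega> \<le> s - r}) \<le> 1 + real j * (1 + l * max s 0)" .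
  moreover have "exp (- r * l) * (\<Sum>k<K. prob {\<omega>\<in>space M. S k \<omega> \<le> s - r})
      \<le> (\<Sum>k<K. prob {\<omega>\<in>space M. S k \<omega> \<le> s - r})"
    using rate_pos r_pos by (intro mult_left_le_one_le sum_nonneg) auto
  moreover have "0 \<le> l * slack K s"
    using rate_pos slack_nonneg by simp
  ultimately show ?case
    unfolding sum_prob_S_Suc_le by (simp add: algebra_simps)
qed

lemma summable_prob_S_le: "summable (\<lambda>k. prob {\<omega>\<in>space M. S k \<omega> \<le> s})"
proof -
  obtain j where "s < real j * r"
    using ex_less_of_nat_mult[OF r_pos] by blast
  have "summable (\<lambda>k. prob {\<omega>\<in>space M. S (Suc k) \<omega> \<le> s})"
  proof (rule bounded_imp_summable)
    show "(\<Sum>k\<le>n. prob {\<omega>\<in>space M. S (Suc k) \<omega> \<le> s}) \<le> real j * (1 + l * max s 0)" for n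
      using sum_prob_S_Suc_le_bound[OF \<open>s < real j * r\<close>, of "Suc n"] by (simp only: lessThan_Suc_atMost)
  qed simp
  then show ?thesis by (rule summable_Suc_iff[THEN iffD1])
qed

lemma slack_tendsto_0: "(\<lambda>K. slack K s) \<longlonglongrightarrow> 0"
proof -
  have bound_tendsto_0: "(\<lambda>K. max s 0 * prob {\<omega>\<in>space M. S K \<omega> \<le> s}) \<longlonglongrightarrow> 0"
    using summable_LIMSEQ_zero[OF summable_prob_S_le] by (rule tendsto_mult_right_zero)
  show ?thesis
    by (rule real_tendsto_sandwich[OF always_eventually always_eventually tendsto_const bound_tendsto_0])
       (simp_all add: slack_nonneg slack_le)
qed

definition renewal :: "real \<Rightarrow> real" where
  "renewal s = (\<Sum>k. prob {\<omega>\<in>space M. S k \<omega> \<le> s})"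

lemma renewal_nonneg: "0 \<le> renewal s"
  by (simp add: renewal_def suminf_nonneg summable_prob_S_le)

lemma renewal_neg: "s < 0 \<Longrightarrow> renewal s = 0"
  by (simp add: renewal_def prob_S_le_neg)

lemma renewal_equation:
  assumes "0 \<le> s"
  shows "renewal s = 1 + l * s + exp (- r * l) * renewal (s - r)"
proof -
  have "(\<lambda>K. \<Sum>k<K. prob {\<omega>\<in>space M. S (Suc k) \<omega> \<le> s})
      \<longlonglongrightarrow> exp (- r * l) * renewal (s - r) + l * (max s 0 - 0)"
    unfolding sum_prob_S_Suc_le renewal_def
    by (intro tendsto_intros summable_LIMSEQ summable_prob_S_le slack_tendsto_0)
  moreover have "summable (\<lambda>k. prob {\<omega>\<in>space M. S (Suc k) \<omega> \<le> s})"
    using summable_prob_S_le by (rule summable_Suc_iff[THEN iffD2])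
  ultimately have "(\<Sum>k. prob {\<omega>\<in>space M. S (Suc k) \<omega> \<le> s}) = exp (- r * l) * renewal (s - r) + l * s"
    using assms LIMSEQ_unique summable_LIMSEQ by fastforce
  then show ?thesis
    using assms suminf_split_head[OF summable_prob_S_le[of s]]
    by (simp add: renewal_def prob_space)
qed

lemma renewal_closed_form:
  "real j * r \<le> t \<Longrightarrow> t < real (Suc j) * r \<Longrightarrow>
    exp (- r * l) * renewal (t - r) = (\<Sum>m=1..j. exp (- l * real m * r) * (1 + l * (t - real m * r)))"
proof (induction j arbitrary: t)
  case 0
  then show ?case by (simp add: renewal_neg)
next
  case (Suc j)
  have IH: "exp (- r * l) * renewal (t - r - r)
      = (\<Sum>m=1..j. exp (- l * real m * r) * (1 + l * (t - r - real m * r)))"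
    using Suc.prems by (intro Suc.IH) (simp_all add: algebra_simps)
  have "r \<le> real (Suc j) * r"
    using r_pos by (simp add: algebra_simps)
  then have "exp (- r * l) * renewal (t - r)
      = exp (- r * l) * (1 + l * (t - r)) + exp (- r * l) * (exp (- r * l) * renewal (t - r - r))"
    using Suc.prems by (subst renewal_equation) (simp_all add: distrib_left)
  also have "exp (- r * l) * (exp (- r * l) * renewal (t - r - r))
      = (\<Sum>m=1..j. exp (- l * real (Suc m) * r) * (1 + l * (t - real (Suc m) * r)))"
    unfolding IH sum_distrib_left by (intro sum.cong refl) (simp add: algebra_simps flip: exp_add)
  also have "exp (- r * l) * (1 + l * (t - r)) + \<dots>
      = (\<Sum>m=1..Suc j. exp (- l * real m * r) * (1 + l * (t - real m * r)))"
    unfolding One_nat_def sum.atLeast1_atMost_eq sum.lessThan_Suc_shift by (simp add: mult.commute)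
  finally show ?case .
qed

lemma raft_A_measurable: "(\<lambda>\<omega>. real (raft_A X r t \<omega>)) \<in> borel_measurable M"
proof -
  have "(\<lambda>\<omega>. \<Sum>k<n. if r < X (Suc k) \<omega> then 1 else 0 :: real) \<in> borel_measurable M" for n
    by measurable
  moreover have "(\<lambda>\<omega>. raft_N X r t \<omega>) \<in> measurable M (count_space UNIV)"
    unfolding raft_N_eq_Greatest_S by (rule measurable_Greatest_nat) measurable
  ultimately have "(\<lambda>\<omega>. (\<Sum>k<raft_N X r t \<omega>. if r < X (Suc k) \<omega> then 1 else 0 :: real)) \<in> borel_measurable M"
    by (rule measurable_compose_countable') simp
  then show ?thesis
    unfolding raft_A_def card_filter_atLeastAtMost_eq_sum .
qed

lemma AE_S_unbounded: "AE \<omega> in M. \<exists>n. t < S n \<omega>"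
proof -
  have "prob {\<omega>\<in>space M. \<forall>n. S n \<omega> \<le> t} \<le> prob {\<omega>\<in>space M. S n \<omega> \<le> t}" for n
    by (intro finite_measure_mono) auto
  then have "prob {\<omega>\<in>space M. \<forall>n. S n \<omega> \<le> t} \<le> 0"
    by (intro LIMSEQ_le_const[OF summable_LIMSEQ_zero[OF summable_prob_S_le]]) auto
  then have "emeasure M {\<omega>\<in>space M. \<forall>n. S n \<omega> \<le> t} = 0"
    by (simp add: emeasure_eq_measure measure_le_0_iff)
  then show ?thesis
    by (subst AE_iff_measurable[OF _ refl]) (auto simp: not_less)
qed

lemma AE_raft_A_eq_suminf:
  assumes "0 \<le> t"
  shows "AE \<omega> in M. ennreal (real (raft_A X r t \<omega>))
    = (\<Sum>k. indicator {\<omega>\<in>space M. r < X (Suc k) \<omega> \<and> S (Suc k) \<omega> \<le> t} \<omega>)"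
  using AE_S_strict_mono AE_S_unbounded[of t] AE_space
proof eventually_elim
  case (elim \<omega>)
  then obtain n where "t < S n \<omega>" by blast
  then have le_iff: "S k \<omega> \<le> t \<longleftrightarrow> k \<le> raft_N X r t \<omega>" for k
    using strict_mono_le_iff_le_Greatest[of "\<lambda>n. S n \<omega>" t n k] elim assms
    by (simp add: raft_N_eq_Greatest_S)
  have "(\<Sum>k. indicator {\<omega>\<in>space M. r < X (Suc k) \<omega> \<and> S (Suc k) \<omega> \<le> t} \<omega> :: ennreal)
      = (\<Sum>k<raft_N X r t \<omega>. indicator {\<omega>\<in>space M. r < X (Suc k) \<omega> \<and> S (Suc k) \<omega> \<le> t} \<omega>)"
    by (rule suminf_finite) (auto simp: le_iff Suc_le_eq split: split_indicator)
  also have "\<dots> = (\<Sum>k<raft_N X r t \<omega>. ennreal (if r < X (Suc k) \<omega> then 1 else 0))"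
    using elim by (intro sum.cong refl) (auto simp: le_iff Suc_le_eq split: split_indicator)
  also have "\<dots> = ennreal (real (raft_A X r t \<omega>))"
    unfolding raft_A_def card_filter_atLeastAtMost_eq_sum by (rule sum_ennreal) simp
  finally show ?case ..
qed

lemma expectation_raft_A:
  assumes "0 \<le> t"
  shows "expectation (\<lambda>\<omega>. real (raft_A X r t \<omega>)) = exp (- r * l) * renewal (t - r)"
proof -
  have "(\<integral>\<^sup>+\<omega>. ennreal (real (raft_A X r t \<omega>)) \<partial>M)
      = (\<integral>\<^sup>+\<omega>. (\<Sum>k. indicator {\<omega>\<in>space M. r < X (Suc k) \<omega> \<and> S (Suc k) \<omega> \<le> t} \<omega>) \<partial>M)"
    by (rule nn_integral_cong_AE[OF AE_raft_A_eq_suminf[OF assms]])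
  also have "\<dots> = (\<Sum>k. emeasure M {\<omega>\<in>space M. r < X (Suc k) \<omega> \<and> S k \<omega> \<le> t - r})"
    by (subst nn_integral_suminf) (auto intro!: suminf_cong arg_cong[where f="emeasure M"] simp: S_Suc min_def)
  also have "\<dots> = (\<Sum>k. ennreal (exp (- r * l) * prob {\<omega>\<in>space M. S k \<omega> \<le> t - r}))"
    by (simp only: emeasure_X_Suc_gt_and_S_le) (simp add: emeasure_eq_measure ennreal_mult)
  also have "\<dots> = ennreal (\<Sum>k. exp (- r * l) * prob {\<omega>\<in>space M. S k \<omega> \<le> t - r})"
    by (rule suminf_ennreal2) (simp_all add: summable_mult summable_prob_S_le)
  also have "(\<Sum>k. exp (- r * l) * prob {\<omega>\<in>space M. S k \<omega> \<le> t - r}) = exp (- r * l) * renewal (t - r)"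
    unfolding renewal_def by (rule suminf_mult[OF summable_prob_S_le])
  finally have "(\<integral>\<^sup>+\<omega>. ennreal (real (raft_A X r t \<omega>)) \<partial>M) = ennreal (exp (- r * l) * renewal (t - r))" .
  then show ?thesis
    using integral_eq_nn_integral[OF raft_A_measurable] renewal_nonneg[of "t - r"] by simp
qed

end

theorem corollary2:
  fixes M :: "'a measure" and X :: "nat \<Rightarrow> 'a \<Rightarrow> real"
    and l r t :: real and j :: nat
  assumes "prob_space M"
    and "l > 0" and "r > 0"
    and "prob_space.indep_vars M (\<lambda>_. borel) X {1::nat..}"
    and "\<And>k. k \<ge> 1 \<Longrightarrow> distributed M lborel (X k) (exponential_density l)"
    and "real j * r \<le> t" and "t < real (j + 1) * r"
  shows "prob_space.expectation M (\<lambda>\<omega>. real (raft_A X r t \<omega>))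
           = (\<Sum>m=1..j. exp (- l * real m * r) * (1 + l * (t - real m * r)))"
proof -
  interpret raft_process M X l r
    using assms(1-5) by (simp add: raft_process_def raft_process_axioms_def)
  have "0 \<le> t"
    using assms(3,6) by (meson mult_nonneg_nonneg of_nat_0_le_iff less_imp_le order.trans)
  then show ?thesis
    using expectation_raft_A renewal_closed_form[OF assms(6)] assms(7) by simp
qed

end
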